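(* Let $m$ be a positive integer, let $B_m$ be the cardinal B-spline of degree $m$, and let $\omega_i=i/2$ for $i=1,\dots,2m+1$ (so $\{\omega_1,\dots,\omega_{2m+1}\}=\{\tfrac12,1,\tfrac32,\dots,m+\tfrac12\}$). Then the $(2m+1)\times(2m+1)$ matrix $A_{X_m}$ with entries $$(A_{X_m})_{i,j}=B_m\big(m+1+\omega_i-2\omega_j\big),\qquad i,j=1,\dots,2m+1,$$ is nonsingular.
   Context: The cardinal B-spline of degree $m$ is $B_m=\chi_{[0,1]}*\chi_{[0,1]}*\dots*\chi_{[0,1]}$ ($m+1$ factors), the $(m+1)$-fold convolution of the indicator function of $[0,1]$; equivalently it is the box spline $B_X$ associated with the list $X=X_m=(1,1,\dots,1)$ ($m+1$ entries) in $\mathbb{R}$, defined by $\int f\,B_X=\int_{[0,1]^{m+1}} f(t_1+\dots+t_{m+1})\,dt$. It is a spline of degree $m$ with integer knots, supported on $[0,m+1]$. The numbers $\omega_i$ are the half-integer points of the interior $]0,m+1[$ of its support, and $m+1$ is the sum of the elements of $X_m$. *)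

theory Defs
  imports "HOL-Analysis.Analysis" "Jordan_Normal_Form.Determinant"
begin

text \<open>Cardinal B-spline of degree m: the (m+1)-fold convolution of the indicator
  function of [0,1].\<close>
fun cardinal_bspline :: "nat \<Rightarrow> real \<Rightarrow> real" where
  "cardinal_bspline 0 x = indicator {0..1} x"
| "cardinal_bspline (Suc m) x = integral {0..1} (\<lambda>t. cardinal_bspline m (x - t))"

definition omega :: "nat \<Rightarrow> real" where
  "omega i = real i / 2"

text \<open>The (2m+1)x(2m+1) matrix A_{X_m}; JNF matrices are 0-indexed, so entry (i,j)
  corresponds to the paper's entry (i+1,j+1).\<close>
definition A_X :: "nat \<Rightarrow> real mat" where
  "A_X m = mat (2*m+1) (2*m+1)
     (\<lambda>(i,j). cardinal_bspline m (real (m+1) + omega (i+1) - 2 * omega (j+1)))"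

end

theory Submission
  imports Defs
    "HOL-Computational_Algebra.Fundamental_Theorem_Algebra"
    "HOL-Computational_Algebra.Polynomial_Factorial"
    "HOL-Computational_Algebra.Field_as_Ring"
begin

(* Write a vector w in the left kernel of A_{X_m} as a pair of polynomials: beta from its
   even-indexed entries (degree <= m) and alpha from its odd-indexed ones (degree < m). The
   kernel equations then say alpha * P_m + beta * Q_m = 0, where P_m(z) = sum B_m(n) z^n is the
   Euler-Frobenius polynomial (euler_frobenius) and Q_m(z) = sum B_m(n + 1/2) z^n
   (euler_frobenius_mid) has degree m. So w = 0 as soon as P_m and Q_m are coprime.

   The refinement equation B_m(x/2) = 2^-m sum_k C(m+1,k) B_m(x - k) gives
   sum_n B_m(n/2) z^n = 2^-m (1 + z)^(m+1) P_m(z), while the left side is P_m(z^2) + z Q_m(z^2).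
   All zeros of P_m are real and nonpositive: Rolle's theorem together with the recurrence for
   B_m produces m - 1 negative zeros interlacing with those of P_(m-1), the last one coming from
   the reciprocity x^(m+1) P_m(1/x) = P_m(x). A common zero w of P_m and Q_m is therefore
   negative (Q_m(0) = B_m(1/2) > 0), and then i sqrt(-w) would be a nonreal zero of P_m. *)

section \<open>Truncated powers and the B-spline recurrence\<close>

definition trunc_power :: "nat \<Rightarrow> real \<Rightarrow> real" where
  "trunc_power n y = (if y > 0 then y ^ n else 0)"

lemma trunc_power_Suc: "trunc_power (Suc n) y = y * trunc_power n y"
  by (simp add: trunc_power_def)

lemma has_integral_trunc_power_shift:
  assumes "a \<le> b"
  shows "((\<lambda>t. trunc_power n (y - t)) has_integral
           (trunc_power (Suc n) (y - a) - trunc_power (Suc n) (y - b)) / real (Suc n)) {a..b}"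
proof -
  define F where "F t = - trunc_power (Suc n) (y - t) / real (Suc n)" for t
  have max_power: "trunc_power (Suc n) z = max z 0 ^ Suc n" for z
    by (simp add: trunc_power_def max_def)
  have "continuous_on {a..b} F"
    unfolding F_def max_power by (intro continuous_intros) auto
  moreover have "(F has_real_derivative trunc_power n (y - t)) (at t)" if "t \<noteq> y" for t
  proof (cases "t < y")
    case True
    have "((\<lambda>t. - ((y - t) ^ Suc n) / real (Suc n)) has_real_derivative (y - t) ^ n) (at t)"
      by (auto intro!: derivative_eq_intros simp: power_minus_mult simp del: of_nat_Suc)
         (cases n; simp add: field_simps)
    then have "(F has_real_derivative (y - t) ^ n) (at t)"
      by (rule has_field_derivative_transform_within_open[where S = "{..<y}"])
         (use True in \<open>auto simp: F_def trunc_power_def\<close>)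
    then show ?thesis
      using True by (simp add: trunc_power_def)
  next
    case False
    have "((\<lambda>t. 0) has_real_derivative 0) (at t)"
      by simp
    then have "(F has_real_derivative 0) (at t)"
      by (rule has_field_derivative_transform_within_open[where S = "{y<..}"])
         (use False that in \<open>auto simp: F_def trunc_power_def\<close>)
    then show ?thesis
      using False by (simp add: trunc_power_def)
  qed
  ultimately have "((\<lambda>t. trunc_power n (y - t)) has_integral F b - F a) {a..b}"
    using assms
    by (intro fundamental_theorem_of_calculus_interior_strong[where S = "{y}"])
       (auto simp: has_real_derivative_iff_has_vector_derivative)
  moreover have "F b - F a = (trunc_power (Suc n) (y - a) - trunc_power (Suc n) (y - b)) / real (Suc n)"
    unfolding F_def by (simp add: diff_divide_distrib)
  ultimately show ?thesis
    by simp
qed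

lemma sum_binomial_Suc_split:
  fixes h :: "nat \<Rightarrow> 'a::semiring_1"
  shows "(\<Sum>k\<le>Suc N. of_nat (Suc N choose k) * h k) =
         (\<Sum>k\<le>N. of_nat (N choose k) * h k) + (\<Sum>k\<le>N. of_nat (N choose k) * h (Suc k))"
proof -
  have "(\<Sum>k\<le>N. of_nat (N choose k) * h k) = (\<Sum>k\<le>Suc N. of_nat (N choose k) * h k)"
    by (simp add: binomial_eq_0)
  also have "\<dots> = h 0 + (\<Sum>k\<le>N. of_nat (N choose Suc k) * h (Suc k))"
    by (subst sum.atMost_Suc_shift) simp
  finally have "(\<Sum>k\<le>N. of_nat (N choose k) * h k) = h 0 + (\<Sum>k\<le>N. of_nat (N choose Suc k) * h (Suc k))" .
  moreover have "(\<Sum>k\<le>Suc N. of_nat (Suc N choose k) * h k) =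
      h 0 + (\<Sum>k\<le>N. of_nat (N choose Suc k) * h (Suc k)) + (\<Sum>k\<le>N. of_nat (N choose k) * h (Suc k))"
    by (subst sum.atMost_Suc_shift) (simp add: distrib_right sum.distrib ac_simps)
  ultimately show ?thesis
    by simp
qed

lemma sum_index_times_binomial:
  fixes g :: "nat \<Rightarrow> 'a::semiring_1"
  shows "(\<Sum>k\<le>N. of_nat k * of_nat (N choose k) * g k) =
         (\<Sum>k\<le>N. of_nat (N - k) * of_nat (N choose k) * g (Suc k))"
proof -
  have absorb: "Suc k * (N choose Suc k) = (N - k) * (N choose k)" for k
    by (metis binomial_absorption binomial_absorb_comp)
  have "(\<Sum>k\<le>N. of_nat k * of_nat (N choose k) * g k) =
        (\<Sum>k\<le>Suc N. of_nat k * of_nat (N choose k) * g k)"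
    by (simp add: binomial_eq_0)
  also have "\<dots> = (\<Sum>k\<le>N. of_nat (Suc k) * of_nat (N choose Suc k) * g (Suc k))"
    by (subst sum.atMost_Suc_shift) simp
  also have "\<dots> = (\<Sum>k\<le>N. of_nat (N - k) * of_nat (N choose k) * g (Suc k))"
    by (simp only: of_nat_mult[symmetric] absorb)
  finally show ?thesis .
qed

definition trunc_power_diff :: "nat \<Rightarrow> real \<Rightarrow> real" where
  "trunc_power_diff m x = (\<Sum>k\<le>m+1. (-1)^k * real (m+1 choose k) * trunc_power m (x - real k))"

declare cardinal_bspline.simps [simp del]

lemma has_integral_trunc_power_diff:
  "((\<lambda>t. trunc_power_diff m (x - t)) has_integral trunc_power_diff (Suc m) x / real (Suc m)) {0..1}"
proof -
  let ?c = "\<lambda>k. (-1)^k * real (m+1 choose k)"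
  let ?d = "\<lambda>k. trunc_power (Suc m) (x - real k) - trunc_power (Suc m) (x - real k - 1)"
  have int: "((\<lambda>t. \<Sum>k\<le>m+1. ?c k * trunc_power m ((x - real k) - t)) has_integral
          (\<Sum>k\<le>m+1. ?c k * (?d k / real (Suc m)))) {0..1}"
    by (intro has_integral_sum has_integral_mult_right)
       (auto intro: has_integral_trunc_power_shift[THEN has_integral_eq_rhs])
  have shift: "(\<lambda>t. \<Sum>k\<le>m+1. ?c k * trunc_power m ((x - real k) - t)) = (\<lambda>t. trunc_power_diff m (x - t))"
    by (auto simp: trunc_power_diff_def algebra_simps)
  have diff_Suc: "trunc_power_diff (Suc m) x = (\<Sum>k\<le>m+1. ?c k * ?d k)"
  proof -
    define h where "h k = (-1::real)^k * trunc_power (Suc m) (x - real k)" for k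
    have "trunc_power_diff (Suc m) x = (\<Sum>k\<le>Suc (m+1). real (Suc (m+1) choose k) * h k)"
      by (simp add: trunc_power_diff_def h_def algebra_simps)
    also have "\<dots> = (\<Sum>k\<le>m+1. real (m+1 choose k) * h k) + (\<Sum>k\<le>m+1. real (m+1 choose k) * h (Suc k))"
      by (rule sum_binomial_Suc_split)
    also have "\<dots> = (\<Sum>k\<le>m+1. ?c k * ?d k)"
      by (simp add: h_def sum.distrib[symmetric] algebra_simps)
    finally show ?thesis .
  qed
  have "trunc_power_diff (Suc m) x / real (Suc m) = (\<Sum>k\<le>m+1. ?c k * (?d k / real (Suc m)))"
    by (simp only: diff_Suc sum_divide_distrib times_divide_eq_right)
  with int shift show ?thesis
    by simp
qed

(* The case m = 0, y = 0 is excluded: cardinal_bspline 0 is the indicator of the closed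
   interval [0,1], whereas trunc_power 0 0 = 0. *)
lemma cardinal_bspline_eq_trunc_power_diff:
  "m \<ge> 1 \<or> y \<noteq> 0 \<Longrightarrow> cardinal_bspline m y = trunc_power_diff m y / fact m"
proof (induction m arbitrary: y)
  case 0
  then show ?case
    by (auto simp: cardinal_bspline.simps trunc_power_diff_def trunc_power_def indicator_def)
next
  case (Suc m)
  have "((\<lambda>t. trunc_power_diff m (y - t) / fact m) has_integral
          trunc_power_diff (Suc m) y / real (Suc m) / fact m) {0..1}"
    by (rule has_integral_divide[OF has_integral_trunc_power_diff])
  then have "((\<lambda>t. cardinal_bspline m (y - t)) has_integral
          trunc_power_diff (Suc m) y / real (Suc m) / fact m) {0..1}"
    by (rule has_integral_spike_finite[where S = "{y}", rotated 2]) (use Suc.IH in auto)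
  then show ?case
    by (simp add: cardinal_bspline.simps integral_unique field_simps del: of_nat_Suc)
qed

lemma trunc_power_diff_Suc:
  "trunc_power_diff (Suc n) y = y * trunc_power_diff n y + (real n + 2 - y) * trunc_power_diff n (y - 1)"
proof -
  define N where "N = Suc n"
  define g where "g k = (-1::real)^k * trunc_power n (y - real k)" for k
  have "trunc_power_diff (Suc n) y = (\<Sum>k\<le>Suc N. real (Suc N choose k) * ((y - real k) * g k))"
    unfolding trunc_power_diff_def g_def N_def by (simp add: trunc_power_Suc algebra_simps)
  also have "\<dots> = (\<Sum>k\<le>N. real (N choose k) * ((y - real k) * g k))
      + (\<Sum>k\<le>N. real (N choose k) * ((y - real (Suc k)) * g (Suc k)))"
    by (rule sum_binomial_Suc_split)
  finally have expand: "trunc_power_diff (Suc n) y = (\<Sum>k\<le>N. real (N choose k) * ((y - real k) * g k))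
      + (\<Sum>k\<le>N. real (N choose k) * ((y - real (Suc k)) * g (Suc k)))" .
  have y_term: "y * trunc_power_diff n y = (\<Sum>k\<le>N. real (N choose k) * (y * g k))"
    unfolding trunc_power_diff_def g_def N_def by (simp add: sum_distrib_left algebra_simps)
  have shifted_term: "(real n + 2 - y) * trunc_power_diff n (y - 1) =
      (\<Sum>k\<le>N. real (N choose k) * (- (real N + 1 - y) * g (Suc k)))"
    unfolding trunc_power_diff_def g_def N_def by (simp add: sum_distrib_left algebra_simps)
  have diff_y_term: "(\<Sum>k\<le>N. real (N choose k) * ((y - real k) * g k)) - (\<Sum>k\<le>N. real (N choose k) * (y * g k))
      = - (\<Sum>k\<le>N. real k * real (N choose k) * g k)"
    by (simp add: sum_subtractf[symmetric] sum_negf[symmetric] algebra_simps)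
  have diff_shifted_term: "(\<Sum>k\<le>N. real (N choose k) * ((y - real (Suc k)) * g (Suc k)))
      - (\<Sum>k\<le>N. real (N choose k) * (- (real N + 1 - y) * g (Suc k)))
      = (\<Sum>k\<le>N. real (N - k) * real (N choose k) * g (Suc k))"
    unfolding sum_subtractf[symmetric] by (rule sum.cong) (auto simp: of_nat_diff algebra_simps)
  show ?thesis
    using expand y_term shifted_term diff_y_term diff_shifted_term sum_index_times_binomial[of N g] by linarith
qed

lemma cardinal_bspline_recurrence:
  assumes "m \<ge> 1"
  shows "real (Suc m) * cardinal_bspline (Suc m) y =
           y * cardinal_bspline m y + (real m + 2 - y) * cardinal_bspline m (y - 1)"
proof -
  have "real (Suc m) * cardinal_bspline (Suc m) y = trunc_power_diff (Suc m) y / fact m"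
    using cardinal_bspline_eq_trunc_power_diff[of "Suc m" y] by (simp add: field_simps del: of_nat_Suc)
  also have "\<dots> = (y * trunc_power_diff m y + (real m + 2 - y) * trunc_power_diff m (y - 1)) / fact m"
    by (simp add: trunc_power_diff_Suc)
  also have "\<dots> = y * cardinal_bspline m y + (real m + 2 - y) * cardinal_bspline m (y - 1)"
  proof -
    have "trunc_power_diff m z = fact m * cardinal_bspline m z" for z
      using cardinal_bspline_eq_trunc_power_diff[of m z] assms by simp
    then show ?thesis
      by (simp add: field_simps)
  qed
  finally show ?thesis .
qed

lemma cardinal_bspline_1:
  "cardinal_bspline 1 y = (if y \<le> 0 then 0 else if y \<le> 1 then y else if y \<le> 2 then 2 - y else 0)"
  using cardinal_bspline_eq_trunc_power_diff[of 1 y]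
  by (simp add: trunc_power_diff_def trunc_power_def numeral_2_eq_2)

section \<open>Support, symmetry and refinement of B-splines\<close>

lemma cardinal_bspline_sign:
  assumes "m \<ge> 1"
  shows "if 0 < y \<and> y < real m + 1 then cardinal_bspline m y > 0 else cardinal_bspline m y = 0"
  using assms
proof (induction m arbitrary: y rule: nat_induct_at_least)
  case base
  then show ?case
    using cardinal_bspline_1[of y] by simp
next
  case (Suc m)
  have rec: "cardinal_bspline (Suc m) y =
      (y * cardinal_bspline m y + (real m + 2 - y) * cardinal_bspline m (y - 1)) / real (Suc m)"
    using cardinal_bspline_recurrence[OF Suc.hyps, of y] by (simp add: field_simps del: of_nat_Suc)
  have nonneg: "cardinal_bspline m y \<ge> 0" "cardinal_bspline m (y - 1) \<ge> 0"
    using Suc.IH[of y] Suc.IH[of "y - 1"] by (auto split: if_splits)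
  show ?case
  proof (cases "0 < y \<and> y < real (Suc m) + 1")
    case True
    then have "cardinal_bspline m y > 0 \<or> cardinal_bspline m (y - 1) > 0"
      using Suc.IH[of y] Suc.IH[of "y - 1"] Suc.hyps by (auto split: if_splits)
    then have "y * cardinal_bspline m y + (real m + 2 - y) * cardinal_bspline m (y - 1) > 0"
      using True nonneg by (auto intro: add_pos_nonneg add_nonneg_pos)
    then show ?thesis
      using True by (simp add: rec)
  next
    case False
    then have "cardinal_bspline m y = 0" "cardinal_bspline m (y - 1) = 0"
      using Suc.IH[of y] Suc.IH[of "y - 1"] by (auto split: if_splits)
    then show ?thesis
      using False by (simp add: rec)
  qed
qed

lemma cardinal_bspline_pos: "m \<ge> 1 \<Longrightarrow> 0 < y \<Longrightarrow> y < real m + 1 \<Longrightarrow> cardinal_bspline m y > 0"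
  using cardinal_bspline_sign[of m y] by simp

lemma cardinal_bspline_eq_0: "m \<ge> 1 \<Longrightarrow> y \<le> 0 \<or> y \<ge> real m + 1 \<Longrightarrow> cardinal_bspline m y = 0"
  using cardinal_bspline_sign[of m y] by auto

lemma cardinal_bspline_symmetric:
  assumes "m \<ge> 1"
  shows "cardinal_bspline m (real m + 1 - y) = cardinal_bspline m y"
  using assms
proof (induction m arbitrary: y rule: nat_induct_at_least)
  case base
  then show ?case
    using cardinal_bspline_1[of y] cardinal_bspline_1[of "2 - y"] by simp
next
  case (Suc m)
  have "real (Suc m) * cardinal_bspline (Suc m) (real (Suc m) + 1 - y) =
      (real m + 2 - y) * cardinal_bspline m (real m + 2 - y) + y * cardinal_bspline m (real m + 1 - y)"
    using cardinal_bspline_recurrence[OF Suc.hyps, of "real (Suc m) + 1 - y"] by (simp add: algebra_simps)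
  also have "\<dots> = real (Suc m) * cardinal_bspline (Suc m) y"
    using Suc.IH[of y] Suc.IH[of "y - 1"] cardinal_bspline_recurrence[OF Suc.hyps, of y]
    by (simp add: algebra_simps)
  finally show ?case
    by (simp del: of_nat_Suc)
qed

lemma binomial_sum_recurrence:
  fixes f :: "real \<Rightarrow> real"
  shows "(\<Sum>k\<le>Suc N. real (Suc N choose k) *
            ((x - real k) * f (x - real k) + (real N + 1 - (x - real k)) * f (x - real k - 1)))
       = x * (\<Sum>k\<le>N. real (N choose k) * f (x - real k))
         + (2 * real N + 2 - x) * (\<Sum>k\<le>N. real (N choose k) * f (x - real k - 2))"
proof -
  define h where "h k = (x - real k) * f (x - real k) + (real N + 1 - (x - real k)) * f (x - real k - 1)" for k
  define S where "S j = (\<Sum>k\<le>N. real (N choose k) * f (x - real k - j))" for j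
  define T where "T j = (\<Sum>k\<le>N. real k * real (N choose k) * f (x - real k - j))" for j
  have T_eq: "T j = real N * S (j + 1) - T (j + 1)" for j
  proof -
    have "T j = (\<Sum>k\<le>N. real (N - k) * real (N choose k) * f (x - real (Suc k) - j))"
      unfolding T_def by (rule sum_index_times_binomial)
    also have "\<dots> = (\<Sum>k\<le>N. real N * (real (N choose k) * f (x - real k - (j + 1)))
                        - real k * real (N choose k) * f (x - real k - (j + 1)))"
      by (rule sum.cong) (auto simp: of_nat_diff algebra_simps)
    finally show ?thesis
      unfolding S_def T_def by (simp add: sum_subtractf sum_distrib_left)
  qed
  have "(\<Sum>k\<le>Suc N. real (Suc N choose k) * h k) =
      (\<Sum>k\<le>N. real (N choose k) * h k) + (\<Sum>k\<le>N. real (N choose k) * h (Suc k))"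
    by (rule sum_binomial_Suc_split)
  also have "(\<Sum>k\<le>N. real (N choose k) * h k) = x * S 0 - T 0 + (real N + 1 - x) * S 1 + T 1"
    unfolding h_def S_def T_def by (simp add: sum.distrib sum_subtractf sum_distrib_left algebra_simps)
  also have "(\<Sum>k\<le>N. real (N choose k) * h (Suc k)) = (x - 1) * S 1 - T 1 + (real N + 2 - x) * S 2 + T 2"
    unfolding h_def S_def T_def by (simp add: sum.distrib sum_subtractf sum_distrib_left algebra_simps)
  finally have "(\<Sum>k\<le>Suc N. real (Suc N choose k) * h k) = x * S 0 + (2 * real N + 2 - x) * S 2"
    using T_eq[of 0] T_eq[of 1] by (simp add: algebra_simps)
  then show ?thesis
    unfolding h_def S_def by simp
qed

lemma cardinal_bspline_refinement:
  assumes "m \<ge> 1"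
  shows "cardinal_bspline m (x / 2) = (\<Sum>k\<le>m+1. real (m+1 choose k) * cardinal_bspline m (x - real k)) / 2 ^ m"
  using assms
proof (induction m arbitrary: x rule: nat_induct_at_least)
  case base
  show ?case
    using cardinal_bspline_1[of "x / 2"] cardinal_bspline_1[of x] cardinal_bspline_1[of "x - 1"]
      cardinal_bspline_1[of "x - 2"]
    by (simp add: numeral_2_eq_2 split: if_splits)
next
  case (Suc n)
  define N where "N = Suc n"
  define F where "F y = (\<Sum>k\<le>N. real (N choose k) * cardinal_bspline n (y - real k))" for y
  have IH: "cardinal_bspline n (x / 2) = F x / 2 ^ n" "cardinal_bspline n (x / 2 - 1) = F (x - 2) / 2 ^ n"
    using Suc.IH[of x] Suc.IH[of "x - 2"] by (simp_all add: F_def N_def diff_divide_distrib)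
  have rec: "cardinal_bspline (Suc n) z =
      (z * cardinal_bspline n z + (real N + 1 - z) * cardinal_bspline n (z - 1)) / real (Suc n)" for z
    using cardinal_bspline_recurrence[OF Suc.hyps, of z] by (simp add: N_def field_simps)
  have "real (Suc n) * (\<Sum>k\<le>Suc N. real (Suc N choose k) * cardinal_bspline (Suc n) (x - real k)) =
      (\<Sum>k\<le>Suc N. real (Suc N choose k) * ((x - real k) * cardinal_bspline n (x - real k)
         + (real N + 1 - (x - real k)) * cardinal_bspline n (x - real k - 1)))"
    unfolding rec sum_distrib_left by (intro sum.cong refl) (simp del: of_nat_Suc)
  also have "\<dots> = x * F x + (2 * real N + 2 - x) * F (x - 2)"
    unfolding F_def by (subst binomial_sum_recurrence) (simp add: algebra_simps)
  also have "\<dots> = 2 ^ Suc n * (real (Suc n) * cardinal_bspline (Suc n) (x / 2))"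
    using cardinal_bspline_recurrence[OF Suc.hyps, of "x / 2"] IH by (simp add: N_def field_simps)
  finally have "real (Suc n) * (\<Sum>k\<le>Suc N. real (Suc N choose k) * cardinal_bspline (Suc n) (x - real k)) =
      real (Suc n) * (2 ^ Suc n * cardinal_bspline (Suc n) (x / 2))"
    by (simp only: mult.left_commute[of _ "real (Suc n)"])
  then have "(\<Sum>k\<le>Suc n + 1. real (Suc n + 1 choose k) * cardinal_bspline (Suc n) (x - real k)) =
      2 ^ Suc n * cardinal_bspline (Suc n) (x / 2)"
    unfolding mult_cancel_left N_def by simp
  then show ?case
    by simp
qed

section \<open>The Euler--Frobenius polynomial\<close>

lemma coeff_sum_monom:
  fixes f :: "nat \<Rightarrow> 'a::comm_monoid_add"
  shows "coeff (\<Sum>n\<le>N. monom (f n) n) k = (if k \<le> N then f k else 0)"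
proof -
  have "coeff (\<Sum>n\<le>N. monom (f n) n) k = (\<Sum>n\<le>N. if n = k then f n else 0)"
    unfolding coeff_sum coeff_monom by (simp add: eq_commute)
  then show ?thesis
    by simp
qed

lemma x_times_poly_pderiv_sum_monom:
  fixes c :: "nat \<Rightarrow> 'a::{comm_semiring_1,semiring_no_zero_divisors}"
  shows "x * poly (pderiv (\<Sum>n\<le>N. monom (c n) n)) x = (\<Sum>n\<le>N. of_nat n * c n * x ^ n)"
proof -
  have "pderiv (\<Sum>n\<le>N. monom (c n) n) = (\<Sum>n\<le>N. monom (of_nat n * c n) (n - 1))"
    using higher_pderiv_sum[of 1 "\<lambda>n. monom (c n) n" "{..N}"] by (simp add: pderiv_monom)
  moreover have "x * (of_nat n * c n * x ^ (n - 1)) = of_nat n * c n * x ^ n" for n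
    by (cases n) (simp_all add: ac_simps)
  ultimately show ?thesis
    by (simp add: poly_sum poly_monom sum_distrib_left)
qed

(* The summand n = m + 1 vanishes; it keeps the index shifts of the recurrence in range. *)
definition euler_frobenius :: "nat \<Rightarrow> 'a::{comm_ring_1,real_algebra_1} poly" where
  "euler_frobenius m = (\<Sum>n\<le>m+1. monom (of_real (cardinal_bspline m (real n))) n)"

lemma coeff_euler_frobenius:
  "m \<ge> 1 \<Longrightarrow> coeff (euler_frobenius m) k = of_real (cardinal_bspline m (real k))"
  unfolding euler_frobenius_def coeff_sum_monom by (simp add: cardinal_bspline_eq_0)

lemma degree_euler_frobenius:
  assumes "m \<ge> 1"
  shows "degree (euler_frobenius m :: 'a::{comm_ring_1,real_algebra_1} poly) = m"
proof (rule antisym)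
  show "degree (euler_frobenius m :: 'a poly) \<le> m"
    using assms by (intro degree_le) (simp add: coeff_euler_frobenius cardinal_bspline_eq_0)
  show "m \<le> degree (euler_frobenius m :: 'a poly)"
    using assms cardinal_bspline_pos[of m "real m"] by (intro le_degree) (simp add: coeff_euler_frobenius)
qed

lemma poly_euler_frobenius:
  "poly (euler_frobenius m) x = (\<Sum>n\<le>m+1. of_real (cardinal_bspline m (real n)) * x ^ n)"
  unfolding euler_frobenius_def by (simp add: poly_sum poly_monom)

lemma poly_euler_frobenius_of_real:
  "poly (euler_frobenius m) (of_real x) = of_real (poly (euler_frobenius m) x)"
  by (simp add: poly_euler_frobenius)

lemma poly_euler_frobenius_0: "m \<ge> 1 \<Longrightarrow> poly (euler_frobenius m) 0 = 0"
  by (simp add: poly_0_coeff_0 coeff_euler_frobenius cardinal_bspline_eq_0)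

lemma euler_frobenius_reciprocal:
  assumes m: "m \<ge> 1" and x: "x \<noteq> 0"
  shows "poly (euler_frobenius m) (1 / x) * x ^ (m+1) = poly (euler_frobenius m) (x :: real)"
proof -
  define h where "h n = cardinal_bspline m (real n) * x ^ (m + 1 - n)" for n
  have "poly (euler_frobenius m) (1 / x) * x ^ (m+1) = (\<Sum>n<m+2. h n)"
  proof -
    have "cardinal_bspline m (real n) * (1 / x) ^ n * x ^ (m + 1) = h n" if "n < m + 2" for n
    proof -
      have "x ^ (m + 1) = x ^ n * x ^ (m + 1 - n)"
        using that by (simp add: power_add[symmetric])
      then show ?thesis
        using x by (simp add: h_def power_one_over field_simps)
    qed
    moreover have "{..m+1} = {..<m+2}"
      by auto
    ultimately show ?thesis
      unfolding poly_euler_frobenius sum_distrib_right by (intro sum.cong) auto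
  qed
  also have "\<dots> = (\<Sum>n<m+2. h (m + 2 - Suc n))"
    by (rule sum.nat_diff_reindex[symmetric])
  also have "\<dots> = (\<Sum>n<m+2. cardinal_bspline m (real n) * x ^ n)"
  proof (rule sum.cong[OF refl])
    fix n assume "n \<in> {..<m+2}"
    then have "real (m + 1 - n) = real m + 1 - real n" "m + 1 - (m + 1 - n) = n"
      by (auto simp: of_nat_diff)
    then show "h (m + 2 - Suc n) = cardinal_bspline m (real n) * x ^ n"
      using cardinal_bspline_symmetric[OF m, of "real n"] by (simp add: h_def algebra_simps)
  qed
  also have "\<dots> = poly (euler_frobenius m) x"
    unfolding poly_euler_frobenius by (intro sum.cong) auto
  finally show ?thesis .
qed

lemma euler_frobenius_recurrence:
  assumes "m \<ge> 1"
  shows "(1 - x) * (x * poly (pderiv (euler_frobenius m)) x) + real (Suc m) * x * poly (euler_frobenius m) x =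
         real (Suc m) * poly (euler_frobenius (Suc m)) (x :: real)"
proof -
  let ?B = "\<lambda>n. cardinal_bspline m (real n)"
  have deriv: "x * poly (pderiv (euler_frobenius m)) x = (\<Sum>n\<le>m+1. real n * ?B n * x ^ n)"
    unfolding euler_frobenius_def x_times_poly_pderiv_sum_monom by simp
  have "real (Suc m) * poly (euler_frobenius (Suc m)) x =
      (\<Sum>n\<le>m+2. (real (Suc m) * cardinal_bspline (Suc m) (real n)) * x ^ n)"
    unfolding poly_euler_frobenius sum_distrib_left by (simp add: algebra_simps)
  also have "\<dots> = (\<Sum>n\<le>m+2. real n * ?B n * x ^ n) +
                   (\<Sum>n\<le>m+2. (real m + 2 - real n) * cardinal_bspline m (real n - 1) * x ^ n)"
    unfolding sum.distrib[symmetric] cardinal_bspline_recurrence[OF assms]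
    by (simp add: algebra_simps)
  also have "(\<Sum>n\<le>m+2. real n * ?B n * x ^ n) = (\<Sum>n\<le>m+1. real n * ?B n * x ^ n)"
    using cardinal_bspline_eq_0[OF assms, of "real (m + 2)"] by simp
  also have "(\<Sum>n\<le>m+2. (real m + 2 - real n) * cardinal_bspline m (real n - 1) * x ^ n) =
      (\<Sum>n\<le>m+1. (real m + 1 - real n) * ?B n * x ^ Suc n)"
  proof -
    have "m + 2 = Suc (m + 1)"
      by simp
    then show ?thesis
      using cardinal_bspline_eq_0[OF assms, of "-1"]
      by (simp only:) (subst sum.atMost_Suc_shift, simp add: algebra_simps)
  qed
  also have "(\<Sum>n\<le>m+1. real n * ?B n * x ^ n) + (\<Sum>n\<le>m+1. (real m + 1 - real n) * ?B n * x ^ Suc n) =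
      (1 - x) * (x * poly (pderiv (euler_frobenius m)) x) + real (Suc m) * x * poly (euler_frobenius m) x"
    unfolding deriv poly_euler_frobenius sum_distrib_left sum.distrib[symmetric]
    by (intro sum.cong refl) (simp add: algebra_simps)
  finally show ?thesis
    by simp
qed

lemma DERIV_poly_div_one_minus_power:
  fixes p :: "real poly"
  assumes "x \<noteq> 1"
  shows "((\<lambda>x. poly p x / (1 - x) ^ Suc k) has_real_derivative
           ((1 - x) * poly (pderiv p) x + real (Suc k) * poly p x) / (1 - x) ^ Suc (Suc k)) (at x)"
proof -
  have "((\<lambda>x. 1 - x) has_real_derivative -1) (at x)"
    by (auto intro!: derivative_eq_intros)
  from DERIV_chain2[OF DERIV_pow[of "Suc k" "1 - x"] this]
  have "((\<lambda>x. (1 - x) ^ Suc k) has_real_derivative - (real (Suc k) * (1 - x) ^ k)) (at x)"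
    by simp
  from DERIV_divide[OF poly_DERIV this]
  have deriv: "((\<lambda>x. poly p x / (1 - x) ^ Suc k) has_real_derivative
          ((1 - x) ^ k * ((1 - x) * poly (pderiv p) x + real (Suc k) * poly p x)) /
          ((1 - x) ^ k * (1 - x) ^ Suc (Suc k))) (at x)"
    using assms by (simp add: algebra_simps power_add[symmetric])
  have "(1 - x) ^ k \<noteq> 0"
    using assms by simp
  with deriv show ?thesis
    by (metis mult_divide_mult_cancel_left)
qed

(* Rolle's theorem for P_m(x) / (1 - x)^(m+1): the numerator of its derivative is
   (1 - x) P_m' + (m+1) P_m, which the recurrence identifies with (m+1) P_(m+1) / x. *)
lemma euler_frobenius_Suc_root_between:
  assumes m: "m \<ge> 1" and ab: "a < b" "b \<le> 0"
    and roots: "poly (euler_frobenius m) a = 0" "poly (euler_frobenius m) b = (0::real)"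
  shows "\<exists>c. a < c \<and> c < b \<and> poly (euler_frobenius (Suc m)) c = 0"
proof -
  define P where "P = (euler_frobenius m :: real poly)"
  define g where "g x = poly P x / (1 - x) ^ Suc m" for x
  define h where "h x = (1 - x) * poly (pderiv P) x + real (Suc m) * poly P x" for x
  have g': "(g has_real_derivative h x / (1 - x) ^ Suc (Suc m)) (at x)" if "x < 1" for x
    unfolding g_def h_def using that by (intro DERIV_poly_div_one_minus_power) simp
  have "continuous_on {a..b} g"
    using ab by (intro continuous_at_imp_continuous_on ballI DERIV_isCont[OF g']) auto
  moreover have "g differentiable (at x)" if "a < x" "x < b" for x
    using g'[of x] that ab unfolding differentiable_def has_field_derivative_def by auto
  moreover have "g a = g b"
    unfolding g_def P_def using roots by simp
  ultimately obtain c where c: "a < c" "c < b" "(g has_real_derivative 0) (at c)"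
    using Rolle[OF ab(1)] by blast
  then have "c < 1"
    using ab by simp
  then have "h c = 0"
    using DERIV_unique[OF g'[OF \<open>c < 1\<close>] c(3)] by simp
  moreover have "real (Suc m) * poly (euler_frobenius (Suc m)) c = c * h c"
    using euler_frobenius_recurrence[OF m, of c] unfolding P_def h_def by (simp add: algebra_simps)
  ultimately have "poly (euler_frobenius (Suc m)) c = 0"
    by simp
  then show ?thesis
    using c by blast
qed

section \<open>The zeros of the Euler--Frobenius polynomial\<close>

definition euler_frobenius_neg_roots :: "nat \<Rightarrow> real set" where
  "euler_frobenius_neg_roots m = {x. x < 0 \<and> poly (euler_frobenius m) x = 0}"

lemma finite_euler_frobenius_neg_roots: "m \<ge> 1 \<Longrightarrow> finite (euler_frobenius_neg_roots m)"
proof -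
  assume m: "m \<ge> 1"
  then have "euler_frobenius m \<noteq> (0 :: real poly)"
    using degree_euler_frobenius[OF m, where 'a = real] m by auto
  from poly_roots_finite[OF this] show ?thesis
    unfolding euler_frobenius_neg_roots_def by (rule rev_finite_subset) auto
qed

lemma euler_frobenius_neg_roots_inverse:
  "m \<ge> 1 \<Longrightarrow> x \<in> euler_frobenius_neg_roots m \<Longrightarrow> 1 / x \<in> euler_frobenius_neg_roots m"
  using euler_frobenius_reciprocal[of m "1 / x"] by (auto simp: euler_frobenius_neg_roots_def)

lemma minus_one_in_euler_frobenius_neg_roots:
  assumes "m \<ge> 1" "even m"
  shows "-1 \<in> euler_frobenius_neg_roots m"
  using euler_frobenius_reciprocal[OF assms(1), of "-1"] assms(2)
  by (simp add: euler_frobenius_neg_roots_def)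

lemma euler_frobenius_neg_roots_interlace:
  assumes m: "m \<ge> 1"
  obtains c where "inj_on c (euler_frobenius_neg_roots m)"
    and "\<And>s. s \<in> euler_frobenius_neg_roots m \<Longrightarrow> s < c s \<and> c s \<in> euler_frobenius_neg_roots (Suc m)"
proof -
  define S where "S = euler_frobenius_neg_roots m"
  have S: "finite S" "\<And>s. s \<in> S \<Longrightarrow> s < 0 \<and> poly (euler_frobenius m) s = 0"
    using finite_euler_frobenius_neg_roots[OF m] by (auto simp: S_def euler_frobenius_neg_roots_def)
  define next_root where "next_root s = Min ({t \<in> S. s < t} \<union> {0})" for s
  have next_root_in: "next_root s \<in> S \<union> {0}" for s
    using Min_in[of "{t \<in> S. s < t} \<union> {0}"] S(1) by (auto simp: next_root_def)
  have next_root_le: "next_root s \<le> t" if "t \<in> S \<union> {0}" "s < t" for s t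
    unfolding next_root_def using S(1) that by (intro Min_le) auto
  have next_root_gt: "s < next_root s" if "s \<in> S" for s
    unfolding next_root_def using S that by (subst Min_gr_iff) auto
  have "\<exists>c. s < c \<and> c < next_root s \<and> poly (euler_frobenius (Suc m)) c = 0" if "s \<in> S" for s
    using next_root_in[of s] next_root_le[of 0 s] S(2)[OF that] S(2) poly_euler_frobenius_0[OF m]
    by (intro euler_frobenius_Suc_root_between[OF m next_root_gt[OF that]]) auto
  then obtain c where
    c: "\<And>s. s \<in> S \<Longrightarrow> s < c s \<and> c s < next_root s \<and> poly (euler_frobenius (Suc m)) (c s) = 0"
    by metis
  have "inj_on c S"
  proof (rule inj_onI, rule ccontr)
    fix s s' assume s: "s \<in> S" "s' \<in> S" "c s = c s'" "s \<noteq> s'"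
    then consider "s < s'" | "s' < s"
      by linarith
    then show False
      using c[OF s(1)] c[OF s(2)] next_root_le[of s' s] next_root_le[of s s'] s by cases fastforce+
  qed
  moreover have "c s \<in> euler_frobenius_neg_roots (Suc m)" if "s \<in> S" for s
    using c[OF that] next_root_le[of 0 s] S(2)[OF that] by (auto simp: euler_frobenius_neg_roots_def)
  ultimately show ?thesis
    using that c unfolding S_def by blast
qed

lemma card_euler_frobenius_neg_roots_Suc:
  assumes m: "m \<ge> 1" and ne: "euler_frobenius_neg_roots m \<noteq> {}"
  shows "card (euler_frobenius_neg_roots (Suc m)) \<ge> card (euler_frobenius_neg_roots m) + 1"
proof -
  define S where "S = euler_frobenius_neg_roots m"
  have S: "finite S" "\<And>s. s \<in> S \<Longrightarrow> s < 0"
    using finite_euler_frobenius_neg_roots[OF m] by (auto simp: S_def euler_frobenius_neg_roots_def)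
  obtain c where inj: "inj_on c S"
    and c: "\<And>s. s \<in> S \<Longrightarrow> s < c s \<and> c s \<in> euler_frobenius_neg_roots (Suc m)"
    using euler_frobenius_neg_roots_interlace[OF m] unfolding S_def by blast
  define M where "M = Max S"
  have "M \<in> S"
    using S(1) ne unfolding M_def S_def by simp
  then have "M < c M" "c M < 0"
    using c[of M] by (auto simp: euler_frobenius_neg_roots_def)
  define e where "e = 1 / c M"
  have "e \<in> euler_frobenius_neg_roots (Suc m)"
    unfolding e_def using c[OF \<open>M \<in> S\<close>] by (intro euler_frobenius_neg_roots_inverse) auto
  (* By reciprocity 1 / M is the least negative root, and e lies below it. *)
  have e_less: "e < s" if "s \<in> S" for s
  proof -
    have "1 / s \<le> M"
      using euler_frobenius_neg_roots_inverse[OF m] that S(1) unfolding M_def S_def by simp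
    then have "1 / M \<le> s"
      using S(2)[OF that] S(2)[OF \<open>M \<in> S\<close>] by (simp add: divide_simps mult.commute)
    moreover have "e < 1 / M"
      unfolding e_def using \<open>M < c M\<close> \<open>c M < 0\<close> by (simp add: divide_simps)
    ultimately show ?thesis
      by simp
  qed
  then have "e \<notin> c ` S"
    using c by (auto dest: less_trans)
  then have "card (insert e (c ` S)) = card S + 1"
    using card_image[OF inj] S(1) by simp
  moreover have "insert e (c ` S) \<subseteq> euler_frobenius_neg_roots (Suc m)"
    using \<open>e \<in> _\<close> c by auto
  moreover have "finite (euler_frobenius_neg_roots (Suc m))"
    by (simp add: finite_euler_frobenius_neg_roots)
  ultimately show ?thesis
    unfolding S_def by (metis card_mono)
qed

lemma card_euler_frobenius_neg_roots: "m \<ge> 1 \<Longrightarrow> card (euler_frobenius_neg_roots m) \<ge> m - 1"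
proof (induction m rule: nat_induct_at_least)
  case base
  then show ?case
    by simp
next
  case (Suc m)
  show ?case
  proof (cases "m = 1")
    case True
    then have "euler_frobenius_neg_roots (Suc m) \<noteq> {}"
      using minus_one_in_euler_frobenius_neg_roots[of "Suc m"] by auto
    then show ?thesis
      using True finite_euler_frobenius_neg_roots[of "Suc m"] by (simp add: Suc_le_eq card_gt_0_iff)
  next
    case False
    then have "euler_frobenius_neg_roots m \<noteq> {}"
      using Suc by auto
    then show ?thesis
      using card_euler_frobenius_neg_roots_Suc[OF Suc.hyps] Suc.IH by simp
  qed
qed

(* P_m has degree m but at least m distinct nonpositive zeros: 0 and m - 1 negative ones. *)
lemma euler_frobenius_complex_root:
  assumes m: "m \<ge> 1" and z: "poly (euler_frobenius m) z = 0"
  shows "\<exists>x \<le> 0. z = complex_of_real x"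
proof (rule ccontr)
  assume z_not_real: "\<not> (\<exists>x \<le> 0. z = complex_of_real x)"
  define N where "N = insert 0 (euler_frobenius_neg_roots m)"
  define R where "R = {z. poly (euler_frobenius m) z = (0::complex)}"
  have N: "finite N" "card N = card (euler_frobenius_neg_roots m) + 1" "\<And>x. x \<in> N \<Longrightarrow> x \<le> 0"
    using finite_euler_frobenius_neg_roots[OF m] by (auto simp: N_def euler_frobenius_neg_roots_def)
  have nonzero: "euler_frobenius m \<noteq> (0 :: complex poly)"
    using degree_euler_frobenius[OF m, where 'a = complex] m by auto
  have "card R \<le> m"
    unfolding R_def using card_poly_roots_bound[OF nonzero] degree_euler_frobenius[OF m, where 'a = complex]
    by simp
  have "z \<notin> complex_of_real ` N"
    using z_not_real N(3) by auto
  with N(1) have "card (insert z (complex_of_real ` N)) = card N + 1"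
    by (simp add: card_image inj_on_def)
  moreover have "poly (euler_frobenius m) (complex_of_real x) = 0" if "x \<in> N" for x
    using that poly_euler_frobenius_0[OF m, where 'a = real]
    by (auto simp: N_def euler_frobenius_neg_roots_def poly_euler_frobenius_of_real)
  then have "insert z (complex_of_real ` N) \<subseteq> R"
    using z by (auto simp: R_def)
  then have "card (insert z (complex_of_real ` N)) \<le> card R"
    by (intro card_mono) (simp_all add: R_def poly_roots_finite[OF nonzero])
  ultimately show False
    using \<open>card R \<le> m\<close> N(2) card_euler_frobenius_neg_roots[OF m] m by linarith
qed

section \<open>Coprimality with the midpoint polynomial\<close>

lemma sum_lessThan_double_split:
  fixes f :: "nat \<Rightarrow> 'a::comm_monoid_add"
  shows "(\<Sum>n<2*N. f n) = (\<Sum>k<N. f (2*k)) + (\<Sum>k<N. f (2*k+1))"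
  by (induction N) (simp_all add: algebra_simps)

lemma sum_lessThan_double_Suc_split:
  fixes f :: "nat \<Rightarrow> 'a::comm_monoid_add"
  shows "(\<Sum>n<2*N+1. f n) = (\<Sum>k<N+1. f (2*k)) + (\<Sum>k<N. f (2*k+1))"
  by (induction N) (simp_all add: algebra_simps)

definition euler_frobenius_mid :: "nat \<Rightarrow> 'a::{comm_ring_1,real_algebra_1} poly" where
  "euler_frobenius_mid m = (\<Sum>n\<le>m. monom (of_real (cardinal_bspline m (real n + 1/2))) n)"

definition euler_frobenius_half :: "nat \<Rightarrow> 'a::{comm_ring_1,real_algebra_1} poly" where
  "euler_frobenius_half m = (\<Sum>n\<le>2*m+1. monom (of_real (cardinal_bspline m (real n / 2))) n)"

lemma coeff_euler_frobenius_mid: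
  "m \<ge> 1 \<Longrightarrow> coeff (euler_frobenius_mid m) k = of_real (cardinal_bspline m (real k + 1/2))"
  unfolding euler_frobenius_mid_def coeff_sum_monom by (simp add: cardinal_bspline_eq_0)

lemma degree_euler_frobenius_mid:
  assumes "m \<ge> 1"
  shows "degree (euler_frobenius_mid m :: 'a::{comm_ring_1,real_algebra_1} poly) = m"
proof (rule antisym)
  show "degree (euler_frobenius_mid m :: 'a poly) \<le> m"
    using assms by (intro degree_le) (simp add: coeff_euler_frobenius_mid cardinal_bspline_eq_0)
  show "m \<le> degree (euler_frobenius_mid m :: 'a poly)"
    using assms cardinal_bspline_pos[of m "real m + 1/2"]
    by (intro le_degree) (simp add: coeff_euler_frobenius_mid)
qed

lemma coeff_euler_frobenius_half:
  "m \<ge> 1 \<Longrightarrow> coeff (euler_frobenius_half m) k = of_real (cardinal_bspline m (real k / 2))"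
  unfolding euler_frobenius_half_def coeff_sum_monom by (simp add: cardinal_bspline_eq_0)

lemma coeff_one_plus_X_power: "coeff ([:1, 1:] ^ n) i = (of_nat (n choose i) :: 'a::comm_semiring_1)"
proof (cases "i \<le> n")
  case True
  then show ?thesis
    using coeff_linear_poly_power[OF True, of "1::'a" 1] by simp
next
  case False
  have "degree ([:1::'a, 1:] ^ n) \<le> n"
    using degree_power_le[of "[:1::'a, 1:]" n] by simp
  then have "coeff ([:1::'a, 1:] ^ n) i = 0"
    using False by (intro coeff_eq_0) linarith
  then show ?thesis
    using False by (simp add: binomial_eq_0)
qed

lemma euler_frobenius_half_eq:
  assumes m: "m \<ge> 1"
  shows "euler_frobenius_half m =
           Polynomial.smult (1 / 2 ^ m) ([:1, 1:] ^ (m+1) * (euler_frobenius m :: 'a::real_field poly))"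
proof (rule poly_eqI)
  fix n
  let ?g = "\<lambda>i. real (m+1 choose i) * cardinal_bspline m (real n - real i)"
  have "(\<Sum>i\<le>n. real (m+1 choose i) * cardinal_bspline m (real (n - i))) = (\<Sum>i\<le>n+m+1. ?g i)"
  proof -
    have "(\<Sum>i\<le>n. real (m+1 choose i) * cardinal_bspline m (real (n - i))) = (\<Sum>i\<le>n. ?g i)"
      by (rule sum.cong) (auto simp: of_nat_diff)
    also have "\<dots> = (\<Sum>i\<le>n+m+1. ?g i)"
      by (rule sum.mono_neutral_left) (auto intro!: cardinal_bspline_eq_0[OF m])
    finally show ?thesis .
  qed
  also have "\<dots> = (\<Sum>k\<le>m+1. ?g k)"
    by (rule sum.mono_neutral_right) auto
  also have "\<dots> = 2 ^ m * cardinal_bspline m (real n / 2)"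
    using cardinal_bspline_refinement[OF m, of "real n"] by simp
  finally have "cardinal_bspline m (real n / 2) =
      1 / 2 ^ m * (\<Sum>i\<le>n. real (m+1 choose i) * cardinal_bspline m (real (n - i)))"
    by simp
  then show "coeff (euler_frobenius_half m) n =
      coeff (Polynomial.smult (1 / 2 ^ m) ([:1, 1:] ^ (m+1) * (euler_frobenius m :: 'a poly))) n"
    unfolding coeff_smult coeff_mult coeff_one_plus_X_power coeff_euler_frobenius[OF m] coeff_euler_frobenius_half[OF m]
    by (simp add: of_real_sum)
qed

lemma poly_euler_frobenius_half:
  assumes "m \<ge> 1"
  shows "poly (euler_frobenius_half m) z =
           poly (euler_frobenius m) (z^2) + z * poly (euler_frobenius_mid m) (z^2)"
proof -
  let ?b = "\<lambda>x. of_real (cardinal_bspline m x)"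
  have "poly (euler_frobenius_half m) z = (\<Sum>n<2*(m+1). ?b (real n / 2) * z ^ n)"
    unfolding euler_frobenius_half_def poly_sum poly_monom by (intro sum.cong) auto
  also have "\<dots> = (\<Sum>k<m+1. ?b (real k) * (z^2) ^ k) + z * (\<Sum>k<m+1. ?b (real k + 1/2) * (z^2) ^ k)"
  proof -
    have "real (2 * k) / 2 = real k" "real (2 * k + 1) / 2 = real k + 1/2"
      "z ^ (2 * k) = (z^2) ^ k" "z ^ (2 * k + 1) = z * (z^2) ^ k" for k
      by (simp_all add: power_mult)
    then show ?thesis
      unfolding sum_lessThan_double_split sum_distrib_left by (simp only: mult_ac)
  qed
  also have "(\<Sum>k<m+1. ?b (real k) * (z^2) ^ k) = poly (euler_frobenius m) (z^2)"
    using cardinal_bspline_eq_0[OF assms, of "1 + real m"]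
    unfolding poly_euler_frobenius by (simp add: lessThan_Suc_atMost)
  also have "(\<Sum>k<m+1. ?b (real k + 1/2) * (z^2) ^ k) = poly (euler_frobenius_mid m) (z^2)"
    unfolding euler_frobenius_mid_def poly_sum poly_monom by (intro sum.cong) auto
  finally show ?thesis .
qed

(* A common zero w is negative since the midpoint polynomial is positive at 0; by the
   factorisation of the half-integer polynomial, i sqrt(-w) would be a nonreal zero of P_m. *)
lemma euler_frobenius_no_common_root:
  fixes w :: complex
  assumes m: "m \<ge> 1" and w: "poly (euler_frobenius m) w = 0" "poly (euler_frobenius_mid m) w = 0"
  shows False
proof -
  obtain r where r: "r \<le> 0" "w = complex_of_real r"
    using euler_frobenius_complex_root[OF m w(1)] by blast
  have "poly (euler_frobenius_mid m) 0 = complex_of_real (cardinal_bspline m (1/2))"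
    by (simp add: poly_0_coeff_0 coeff_euler_frobenius_mid[OF m])
  moreover have "cardinal_bspline m (1/2) > 0"
    using m by (intro cardinal_bspline_pos) auto
  ultimately have "r < 0"
    using w(2) r by (cases "r = 0") auto
  define \<zeta> where "\<zeta> = \<i> * complex_of_real (sqrt (- r))"
  have "\<zeta>^2 = w"
    unfolding \<zeta>_def r(2) using \<open>r < 0\<close> by (simp add: power_mult_distrib flip: of_real_power)
  then have "poly (euler_frobenius_half m) \<zeta> = 0"
    using poly_euler_frobenius_half[OF m, of \<zeta>] w by simp
  moreover have "poly [:1, 1:] \<zeta> \<noteq> 0"
    using \<open>r < 0\<close> unfolding \<zeta>_def by (auto simp: complex_eq_iff)
  ultimately have "poly (euler_frobenius m) \<zeta> = 0"
    unfolding euler_frobenius_half_eq[OF m] poly_smult poly_mult poly_power by simp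
  then obtain x where "\<zeta> = complex_of_real x"
    using euler_frobenius_complex_root[OF m] by blast
  then show False
    using \<open>r < 0\<close> unfolding \<zeta>_def by (simp add: complex_eq_iff)
qed

lemma coprime_euler_frobenius_mid:
  assumes m: "m \<ge> 1"
  shows "coprime (euler_frobenius_mid m) (euler_frobenius m :: complex poly)"
proof (rule coprimeI)
  fix d assume d: "d dvd euler_frobenius_mid m" "d dvd (euler_frobenius m :: complex poly)"
  have "euler_frobenius_mid m \<noteq> (0 :: complex poly)"
    using degree_euler_frobenius_mid[OF m, where 'a = complex] m by auto
  then have "d \<noteq> 0"
    using d(1) by auto
  have "degree d = 0"
  proof (rule ccontr)
    assume "degree d \<noteq> 0"
    then obtain z where "poly d z = 0"
      using fundamental_theorem_of_algebra_alt[of d] by fastforce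
    then show False
      using d euler_frobenius_no_common_root[OF m, of z] by (auto elim!: dvdE)
  qed
  then show "is_unit d"
    using \<open>d \<noteq> 0\<close> by (simp add: is_unit_iff_degree)
qed

section \<open>The left kernel of the matrix\<close>

lemma coprime_combination_eq_0:
  fixes p q a b :: "'a::field_gcd poly"
  assumes "coprime p q" "degree a < degree p" "a * q + b * p = 0"
  shows "a = 0 \<and> b = 0"
proof -
  have "p \<noteq> 0"
    using assms(2) by auto
  have "p dvd a * q"
    using assms(3) by (metis add_eq_0_iff dvd_minus_iff dvd_triv_right)
  then have "p dvd a"
    using assms(1) coprime_dvd_mult_left_iff by blast
  then have "a = 0"
    using assms(2) dvd_imp_degree_le[of p a] by fastforce
  with assms(3) \<open>p \<noteq> 0\<close> show ?thesis
    by simp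
qed

lemma sum_monom_eq_0_imp:
  assumes "(\<Sum>k\<in>K. monom (c k) (d k)) = 0" "finite K" "inj_on d K" "k \<in> K"
  shows "c k = 0"
proof -
  have "0 = coeff (\<Sum>k\<in>K. monom (c k) (d k)) (d k)"
    using assms(1) by simp
  also have "\<dots> = (\<Sum>k'\<in>K. if k' = k then c k' else 0)"
    unfolding coeff_sum coeff_monom using assms(3,4) by (intro sum.cong) (auto dest: inj_onD)
  also have "\<dots> = c k"
    using assms(2,4) by simp
  finally show ?thesis
    by simp
qed

lemma degree_sum_monom_le:
  assumes "\<And>k. k \<in> K \<Longrightarrow> d k \<le> n"
  shows "degree (\<Sum>k\<in>K. monom (c k) (d k)) \<le> n"
proof (cases "finite K")
  case True
  then show ?thesis
    using assms by (intro degree_sum_le) (auto intro: order.trans[OF degree_monom_le])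
qed simp

lemma coeff_monom_mult_of_real:
  fixes p :: "'a::{comm_ring_1,real_algebra_1} poly"
  assumes "\<And>j. coeff p j = of_real (g (real j))" "\<And>x. x \<le> -1 \<Longrightarrow> g x = 0"
  shows "coeff (monom (of_real c) d * p) N = of_real (c * g (real N - real d))"
proof (cases "N < d")
  case True
  then show ?thesis
    using assms(2)[of "real N - real d"] by (simp add: coeff_monom_mult)
next
  case False
  then show ?thesis
    using assms(1) by (simp add: coeff_monom_mult of_nat_diff)
qed

(* The kernel equation for column 2m - N of the matrix is the N-th coefficient of
   alpha * P_m + beta * Q_m. *)
lemma euler_frobenius_kernel_coeff:
  fixes m :: nat and w :: "nat \<Rightarrow> real"
  defines "\<alpha> \<equiv> (\<Sum>k<m. monom (complex_of_real (w (2*k+1))) (m-1-k))"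
    and "\<beta> \<equiv> (\<Sum>k\<le>m. monom (complex_of_real (w (2*k))) (m-k))"
  assumes m: "m \<ge> 1" and N: "N \<le> 2*m"
  shows "coeff (\<alpha> * euler_frobenius m + \<beta> * euler_frobenius_mid m) N =
           of_real (\<Sum>i<2*m+1. cardinal_bspline m (real (2*m+1+i) / 2 - real (2*m - N)) * w i)"
proof -
  have column: "real (2*m - N) = 2 * real m - real N"
    using N by (simp add: of_nat_diff)
  have "coeff (\<alpha> * euler_frobenius m) N =
      of_real (\<Sum>k<m. cardinal_bspline m (real (2*m+1+(2*k+1)) / 2 - real (2*m - N)) * w (2*k+1))"
    unfolding \<alpha>_def sum_distrib_right coeff_sum of_real_sum
  proof (intro sum.cong refl)
    fix k assume "k \<in> {..<m}"
    then have "real (m - 1 - k) = real m - 1 - real k"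
      by (simp add: of_nat_diff)
    then have "real (2*m+1+(2*k+1)) / 2 - real (2*m - N) = real N - real (m - 1 - k)"
      unfolding column by simp
    then show "coeff (monom (complex_of_real (w (2*k+1))) (m-1-k) * euler_frobenius m) N =
        of_real (cardinal_bspline m (real (2*m+1+(2*k+1)) / 2 - real (2*m - N)) * w (2*k+1))"
      by (subst coeff_monom_mult_of_real[where g = "cardinal_bspline m"])
         (simp_all add: coeff_euler_frobenius[OF m] cardinal_bspline_eq_0[OF m] mult.commute)
  qed
  moreover have "coeff (\<beta> * euler_frobenius_mid m) N =
      of_real (\<Sum>k<m+1. cardinal_bspline m (real (2*m+1+2*k) / 2 - real (2*m - N)) * w (2*k))"
    unfolding \<beta>_def sum_distrib_right coeff_sum of_real_sum
  proof (intro sum.cong)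
    show "{..m} = {..<m+1}"
      by auto
    fix k assume "k \<in> {..<m+1}"
    then have "real (m - k) = real m - real k"
      by (simp add: of_nat_diff)
    then have "real (2*m+1+2*k) / 2 - real (2*m - N) = real N - real (m - k) + 1/2"
      unfolding column by simp
    then show "coeff (monom (complex_of_real (w (2*k))) (m-k) * euler_frobenius_mid m) N =
        of_real (cardinal_bspline m (real (2*m+1+2*k) / 2 - real (2*m - N)) * w (2*k))"
      by (subst coeff_monom_mult_of_real[where g = "\<lambda>x. cardinal_bspline m (x + 1/2)"])
         (simp_all add: coeff_euler_frobenius_mid[OF m] cardinal_bspline_eq_0[OF m] mult.commute)
  qed
  ultimately show ?thesis
    unfolding sum_lessThan_double_Suc_split by (simp add: add.commute)
qed

lemma euler_frobenius_kernel_combination_eq_0: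
  fixes m :: nat and w :: "nat \<Rightarrow> real"
  defines "\<alpha> \<equiv> (\<Sum>k<m. monom (complex_of_real (w (2*k+1))) (m-1-k))"
    and "\<beta> \<equiv> (\<Sum>k\<le>m. monom (complex_of_real (w (2*k))) (m-k))"
  assumes m: "m \<ge> 1"
    and kernel: "\<And>j. j < 2*m+1 \<Longrightarrow> (\<Sum>i<2*m+1. cardinal_bspline m (real (2*m+1+i) / 2 - real j) * w i) = 0"
  shows "\<alpha> * euler_frobenius m + \<beta> * euler_frobenius_mid m = 0"
proof (rule poly_eqI)
  fix N
  have "degree (\<alpha> * euler_frobenius m + \<beta> * euler_frobenius_mid m) \<le> 2*m"
  proof (intro degree_add_le order.trans[OF degree_mult_le])
    have "degree \<alpha> \<le> m - 1"
      unfolding \<alpha>_def by (rule degree_sum_monom_le) simp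
    then show "degree \<alpha> + degree (euler_frobenius m :: complex poly) \<le> 2*m"
      using degree_euler_frobenius[OF m, where 'a = complex] by simp
    have "degree \<beta> \<le> m"
      unfolding \<beta>_def by (rule degree_sum_monom_le) simp
    then show "degree \<beta> + degree (euler_frobenius_mid m :: complex poly) \<le> 2*m"
      using degree_euler_frobenius_mid[OF m, where 'a = complex] by simp
  qed
  moreover have "2*m - N < 2*m+1"
    by simp
  ultimately show "coeff (\<alpha> * euler_frobenius m + \<beta> * euler_frobenius_mid m) N = coeff 0 N"
    unfolding \<alpha>_def \<beta>_def
    by (cases "N \<le> 2*m")
       (simp_all only: euler_frobenius_kernel_coeff[OF m] kernel of_real_0 coeff_0 coeff_eq_0 not_le)
qed

lemma euler_frobenius_kernel_trivial:
  fixes w :: "nat \<Rightarrow> real"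
  assumes m: "m \<ge> 1"
    and kernel: "\<And>j. j < 2*m+1 \<Longrightarrow> (\<Sum>i<2*m+1. cardinal_bspline m (real (2*m+1+i) / 2 - real j) * w i) = 0"
    and i: "i < 2*m+1"
  shows "w i = 0"
proof -
  define \<alpha> where "\<alpha> = (\<Sum>k<m. monom (complex_of_real (w (2*k+1))) (m-1-k))"
  define \<beta> where "\<beta> = (\<Sum>k\<le>m. monom (complex_of_real (w (2*k))) (m-k))"
  have "degree \<alpha> \<le> m - 1"
    unfolding \<alpha>_def by (rule degree_sum_monom_le) simp
  then have "degree \<alpha> < degree (euler_frobenius_mid m :: complex poly)"
    using m degree_euler_frobenius_mid[OF m, where 'a = complex] by linarith
  then have "\<alpha> = 0 \<and> \<beta> = 0"
    using coprime_combination_eq_0[OF coprime_euler_frobenius_mid[OF m]]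
      euler_frobenius_kernel_combination_eq_0[OF m kernel] unfolding \<alpha>_def \<beta>_def by blast
  show ?thesis
  proof (cases "even i")
    case True
    then obtain k where "i = 2*k" "k \<le> m"
      using i by (auto elim: evenE)
    moreover have "inj_on (\<lambda>k. m - k) {..m}"
      by (rule inj_onI) auto
    ultimately show ?thesis
      using \<open>\<alpha> = 0 \<and> \<beta> = 0\<close>
        sum_monom_eq_0_imp[of "\<lambda>k. complex_of_real (w (2*k))" "\<lambda>k. m - k" "{..m}" k]
      unfolding \<beta>_def by simp
  next
    case False
    then obtain k where "i = 2*k+1" "k < m"
      using i by (auto elim: oddE)
    moreover have "inj_on (\<lambda>k. m - 1 - k) {..<m}"
      by (rule inj_onI) auto
    ultimately show ?thesis
      using \<open>\<alpha> = 0 \<and> \<beta> = 0\<close>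
        sum_monom_eq_0_imp[of "\<lambda>k. complex_of_real (w (2*k+1))" "\<lambda>k. m - 1 - k" "{..<m}" k]
      unfolding \<alpha>_def by simp
  qed
qed

lemma A_X_entry:
  "i < 2*m+1 \<Longrightarrow> j < 2*m+1 \<Longrightarrow> A_X m $$ (i, j) = cardinal_bspline m (real (2*m+1+i) / 2 - real j)"
  unfolding A_X_def omega_def by (simp add: field_simps)

theorem mainTheorem9:
  fixes m :: nat
  assumes "m \<ge> 1"
  shows "det (A_X m) \<noteq> 0"
proof
  assume "det (A_X m) = 0"
  define n where "n = 2*m+1"
  have A: "A_X m \<in> carrier_mat n n"
    unfolding A_X_def n_def by simp
  then have "det (transpose_mat (A_X m)) = 0"
    using \<open>det (A_X m) = 0\<close> by (simp add: det_transpose)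
  then obtain u where u: "u \<in> carrier_vec n" "u \<noteq> 0\<^sub>v n" "transpose_mat (A_X m) *\<^sub>v u = 0\<^sub>v n"
    using det_0_iff_vec_prod_zero[of "transpose_mat (A_X m)" n] A by auto
  have "(\<Sum>i<2*m+1. cardinal_bspline m (real (2*m+1+i) / 2 - real j) * u $ i) = 0" if "j < 2*m+1" for j
  proof -
    have "0 = (transpose_mat (A_X m) *\<^sub>v u) $ j"
      using u(3) that by (simp add: n_def)
    also have "\<dots> = (\<Sum>i<2*m+1. A_X m $$ (i, j) * u $ i)"
      using that u(1) A by (simp add: n_def scalar_prod_def atLeast0LessThan)
    finally show ?thesis
      using that by (simp add: A_X_entry)
  qed
  then have "u $ i = 0" if "i < n" for i
    using euler_frobenius_kernel_trivial[OF assms] that unfolding n_def by blast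
  then have "u = 0\<^sub>v n"
    using u(1) by (intro eq_vecI) auto
  with u(2) show False
    by simp
qed

end
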